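(* Let $n\geq 2$ and $t$ be positive integers. (i) If $t$ is odd, then any two distinct vertices of $D_{n,t}$ are at distance at least $3$ in $S(K_n,t)$. (ii) If $t$ is even, then any two distinct vertices of $D^*_{n,t}=D_{n,t}\setminus\{1^t\}$ are at distance at least $3$ in $S(K_n,t)$.
   Context: For a positive integer $n$ let $[n]=\{1,\dots,n\}$. For positive integers $n,t$, the Sierpiński graph $S(K_n,t)$ is the simple graph with vertex set $[n]^t$ (words $v_1v_2\cdots v_t$ with $v_i\in[n]$), in which $u_1\cdots u_t$ and $v_1\cdots v_t$ are adjacent if and only if there is $s\in[t]$ with $u_j=v_j$ for all $j<s$, $u_s\neq v_s$, and $u_j=v_s$ and $v_j=u_s$ for all $j>s$. Distance is the length of a shortest path. Write $a^k$ for the word consisting of $k$ copies of the letter $a$. The sets $D_{n,t}\subseteq[n]^t$ are defined recursively: $D_{n,1}=\{1\}$, $D_{n,2}=\{11,21,\dots,n1\}$. For $t\geq 3$ and $\mathbf v=v_1\cdots v_{t-2}\in D_{n,t-2}$ put $E_1(\mathbf v)=\{v_1\cdots v_{t-2}\alpha\alpha:\alpha\in[n]\}$, $E_2(\mathbf v)=\{v_1\cdots v_{t-3}\alpha\beta v_{t-2}:\alpha,\beta\in[n]\setminus\{v_{t-2}\}\}$, and, if $\mathbf v$ is not a constant word, let $\ell$ be the largest index in $[t-3]$ with $v_\ell\neq v_{\ell+1}$ and put $E_3(\mathbf v)=\{v_1\cdots v_{\ell-1}v_{\ell+1}v_\ell^{\,t-\ell-2}\alpha v_\ell:\alpha\in[n]\setminus\{v_\ell\}\}$.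 If $t\geq 3$ is odd, $D_{n,t}=E_1(1^{t-2})\cup E_2(1^{t-2})\cup\bigcup_{\mathbf v\in D_{n,t-2}\setminus\{1^{t-2}\}}\big(E_1(\mathbf v)\cup E_2(\mathbf v)\cup E_3(\mathbf v)\big)$. If $t\geq 4$ is even, $D_{n,t}=\{1^{t-2}\alpha1:\alpha\in[n]\}\cup\bigcup_{\mathbf v\in D_{n,t-2}\setminus\{1^{t-2}\}}\big(E_1(\mathbf v)\cup E_2(\mathbf v)\cup E_3(\mathbf v)\big)$. (In this recursion $1^{t-2}\in D_{n,t-2}$ is the only constant word in $D_{n,t-2}$, so $E_3$ is applied only to non-constant words.) *)

theory Defs
  imports Main "HOL-Library.Extended_Nat"
begin

text \<open>Words in [n]^t are lists of length t over {1..n}; positions are 0-indexed.\<close>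

definition sverts :: "nat \<Rightarrow> nat \<Rightarrow> nat list set" where
  "sverts n t = {w. length w = t \<and> set w \<subseteq> {1..n}}"

definition sadj :: "nat \<Rightarrow> nat \<Rightarrow> nat list \<Rightarrow> nat list \<Rightarrow> bool" where
  "sadj n t u v \<longleftrightarrow> u \<in> sverts n t \<and> v \<in> sverts n t \<and>
     (\<exists>s<t. (\<forall>j<s. u!j = v!j) \<and> u!s \<noteq> v!s \<and>
        (\<forall>j. s < j \<and> j < t \<longrightarrow> u!j = v!s \<and> v!j = u!s))"

definition swalk :: "nat \<Rightarrow> nat \<Rightarrow> nat list list \<Rightarrow> bool" where
  "swalk n t p \<longleftrightarrow> p \<noteq> [] \<and> set p \<subseteq> sverts n t \<and>
     (\<forall>i. Suc i < length p \<longrightarrow> sadj n t (p!i) (p!Suc i))"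

definition sdist :: "nat \<Rightarrow> nat \<Rightarrow> nat list \<Rightarrow> nat list \<Rightarrow> enat" where
  "sdist n t u v = (INF p \<in> {p. swalk n t p \<and> hd p = u \<and> last p = v}. enat (length p - 1))"

definition E1 :: "nat \<Rightarrow> nat list \<Rightarrow> nat list set" where
  "E1 n v = {v @ [a, a] | a. a \<in> {1..n}}"

definition E2 :: "nat \<Rightarrow> nat list \<Rightarrow> nat list set" where
  "E2 n v = {butlast v @ [a, b, last v] | a b. a \<in> {1..n} - {last v} \<and> b \<in> {1..n} - {last v}}"

text \<open>0-indexed largest i with i+1 < length v and v!i \<noteq> v!(i+1)
  (this is \<open>\<ell> - 1\<close> for the paper's 1-indexed \<open>\<ell>\<close>).\<close>
definition lastdiff :: "nat list \<Rightarrow> nat" where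
  "lastdiff v = (GREATEST i. Suc i < length v \<and> v!i \<noteq> v!Suc i)"

definition E3 :: "nat \<Rightarrow> nat list \<Rightarrow> nat list set" where
  "E3 n v = (let i = lastdiff v in
     {take i v @ [v!Suc i] @ replicate (length v - i - 1) (v!i) @ [a, v!i] | a. a \<in> {1..n} - {v!i}})"

fun Dset :: "nat \<Rightarrow> nat \<Rightarrow> nat list set" where
  "Dset n 0 = {}"
| "Dset n (Suc 0) = {[1]}"
| "Dset n (Suc (Suc 0)) = {[a, 1] | a. a \<in> {1..n}}"
| "Dset n (Suc (Suc (Suc k))) =
     (let m = Suc k; one = replicate m 1;
          rest = (\<Union>v \<in> Dset n m - {one}. E1 n v \<union> E2 n v \<union> E3 n v) in
      if odd (Suc (Suc (Suc k))) then E1 n one \<union> E2 n one \<union> rest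
      else {one @ [a, 1] | a. a \<in> {1..n}} \<union> rest)"

end

theory Submission
  imports Defs
begin

text \<open>
  A word of length \<open>m + 2\<close> is \<open>w @ [x, y]\<close>. An edge of the Sierpinski graph either fixes \<open>w\<close>
  and joins two tails \<open>[x, y]\<close> adjacent in \<open>S(K_n, 2)\<close>, or it lifts an edge
  \<open>p a c\<^sup>k -- p c a\<^sup>k\<close> on the \<open>w\<close>-level and joins the constant tails \<open>[c, c]\<close> and \<open>[a, a]\<close>.

  Let \<open>B\<close> be a 2-packing (pairwise distance at least 3) on level \<open>m\<close>. A word \<open>w\<close> is in \<open>B\<close>,
  adjacent to exactly one \<open>v \<in> B\<close>, or far from \<open>B\<close>. Attach to \<open>w \<in> B\<close> the constant tails, to
  a neighbour \<open>w\<close> of \<open>v\<close> the tails \<open>[x, a]\<close> with \<open>x \<noteq> a\<close>, where \<open>a\<close> is the letter of \<open>v\<close> at the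
  first position where \<open>v\<close> and \<open>w\<close> differ, and optionally to some far words \<open>z\<close> the tails
  \<open>[x, 1]\<close>. For each \<open>w\<close> its tails form a 2-packing of \<open>S(K_n, 2)\<close>, and lifted edges
  only reach constant tails, which are attached to \<open>B\<close> alone; hence the resulting set of words
  is again a 2-packing. The recursion \<open>E\<^sub>1, E\<^sub>2, E\<^sub>3\<close> produces exactly such tails, with the
  root \<open>1\<^sup>m\<close> as the far word when \<open>m\<close> is even, so the claim follows by induction in steps of two.
\<close>

definition sier_adj :: "'a list \<Rightarrow> 'a list \<Rightarrow> bool" where
  "sier_adj u v \<longleftrightarrow> (\<exists>p a c k. a \<noteq> c \<and> u = p @ a # replicate k c \<and> v = p @ c # replicate k a)"

lemma sier_adjI: "a \<noteq> c \<Longrightarrow> sier_adj (p @ a # replicate k c) (p @ c # replicate k a)"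
  unfolding sier_adj_def by blast

lemma sier_adj_sym: "sier_adj u v \<Longrightarrow> sier_adj v u"
  unfolding sier_adj_def by metis

lemma sier_adj_irrefl: "\<not> sier_adj u u"
  unfolding sier_adj_def by auto

lemma sier_adj_length: "sier_adj u v \<Longrightarrow> length u = length v"
  unfolding sier_adj_def by auto

lemma sier_adj_unique:
  assumes "a \<noteq> c" "a' \<noteq> c'"
    and u: "p @ a # replicate k c = p' @ a' # replicate k' c'"
    and v: "p @ c # replicate k a = p' @ c' # replicate k' a'"
  shows "p = p' \<and> a = a' \<and> c = c' \<and> k = k'"
proof -
  have "length p = length p'"
  proof (rule ccontr)
    assume "length p \<noteq> length p'"
    then consider "length p < length p'" | "length p' < length p" by linarith
    then show False
    proof cases
      case 1
      then have "a = p' ! length p" "c = p' ! length p"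
        using arg_cong[OF u, of "\<lambda>w. w ! length p"] arg_cong[OF v, of "\<lambda>w. w ! length p"]
        by (simp_all add: nth_append)
      then show False using \<open>a \<noteq> c\<close> by simp
    next
      case 2
      then have "a' = p ! length p'" "c' = p ! length p'"
        using arg_cong[OF u, of "\<lambda>w. w ! length p'"] arg_cong[OF v, of "\<lambda>w. w ! length p'"]
        by (simp_all add: nth_append)
      then show False using \<open>a' \<noteq> c'\<close> by simp
    qed
  qed
  then show ?thesis
    using u v by (metis append_eq_append_conv length_replicate list.inject)
qed

lemma sier_adj_pair: "sier_adj [a, b] [x, y] \<longleftrightarrow> (x = a \<and> y \<noteq> b) \<or> (a \<noteq> b \<and> x = b \<and> y = a)"
proof
  assume "sier_adj [a, b] [x, y]"
  then obtain p A C k where "A \<noteq> C" "[a, b] = p @ A # replicate k C" "[x, y] = p @ C # replicate k A"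
    unfolding sier_adj_def by blast
  then show "(x = a \<and> y \<noteq> b) \<or> (a \<noteq> b \<and> x = b \<and> y = a)"
    by (cases p; cases k) (auto simp: Cons_eq_append_conv)
next
  assume "(x = a \<and> y \<noteq> b) \<or> (a \<noteq> b \<and> x = b \<and> y = a)"
  then show "sier_adj [a, b] [x, y]"
    using sier_adjI[of b y "[a]" 0] sier_adjI[of a b "[]" 1] by auto
qed

lemma list_eq_take_nth_replicate:
  assumes "s < length u" and "\<And>j. s < j \<Longrightarrow> j < length u \<Longrightarrow> u ! j = c"
  shows "u = take s u @ u ! s # replicate (length u - s - 1) c"
proof (rule nth_equalityI)
  fix j assume "j < length u"
  then show "u ! j = (take s u @ u ! s # replicate (length u - s - 1) c) ! j"
    using assms by (cases "j < s") (auto simp: nth_append nth_Cons' min_def)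
qed (use assms in simp)

lemma sadj_imp_sier_adj:
  assumes "sadj n t u v"
  shows "sier_adj u v"
proof -
  obtain s where s: "s < t" and lu: "length u = t" and lv: "length v = t"
    and prefix: "\<forall>j<s. u ! j = v ! j" and ne: "u ! s \<noteq> v ! s"
    and tails: "\<forall>j. s < j \<and> j < t \<longrightarrow> u ! j = v ! s \<and> v ! j = u ! s"
    using assms unfolding sadj_def sverts_def by blast
  have "u = take s u @ u ! s # replicate (t - s - 1) (v ! s)"
    using list_eq_take_nth_replicate[of s u "v ! s"] s lu tails by simp
  moreover have "v = take s u @ v ! s # replicate (t - s - 1) (u ! s)"
  proof -
    have "take s v = take s u"
      using nth_take_lemma[of s v u] prefix s lu lv by simp
    then show ?thesis
      using list_eq_take_nth_replicate[of s v "u ! s"] s lv tails by simp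
  qed
  ultimately show ?thesis
    using sier_adjI[OF ne] by metis
qed

definition closed_nbhd :: "'a list \<Rightarrow> 'a list set" where
  "closed_nbhd u = insert u {v. sier_adj u v}"

lemma closed_nbhd_iff: "v \<in> closed_nbhd u \<longleftrightarrow> v = u \<or> sier_adj u v"
  unfolding closed_nbhd_def by auto

lemma closed_nbhd_sym: "v \<in> closed_nbhd u \<Longrightarrow> u \<in> closed_nbhd v"
  unfolding closed_nbhd_iff using sier_adj_sym by blast

lemma closed_nbhd_length: "v \<in> closed_nbhd u \<Longrightarrow> length v = length u"
  unfolding closed_nbhd_iff using sier_adj_length by metis

lemma closed_nbhd_pair: "[x, y] \<in> closed_nbhd [a, b] \<longleftrightarrow> x = a \<or> (a \<noteq> b \<and> x = b \<and> y = a)"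
  by (auto simp: closed_nbhd_iff sier_adj_pair)

lemma closed_nbhd_pair_obtain:
  assumes "x \<in> closed_nbhd [a, b]"
  obtains x1 x2 where "x = [x1, x2]"
  using closed_nbhd_length[OF assms] by (metis length_0_conv length_Suc_conv numeral_2_eq_2)

definition two_packing :: "'a list set \<Rightarrow> bool" where
  "two_packing S \<longleftrightarrow> (\<forall>u\<in>S. \<forall>v\<in>S. u \<noteq> v \<longrightarrow> closed_nbhd u \<inter> closed_nbhd v = {})"

lemma two_packingD:
  "two_packing S \<Longrightarrow> u \<in> S \<Longrightarrow> v \<in> S \<Longrightarrow> x \<in> closed_nbhd u \<Longrightarrow> x \<in> closed_nbhd v \<Longrightarrow> u = v"
  unfolding two_packing_def by blast

lemma two_packingI:
  "(\<And>u v x. u \<in> S \<Longrightarrow> v \<in> S \<Longrightarrow> x \<in> closed_nbhd u \<Longrightarrow> x \<in> closed_nbhd v \<Longrightarrow> u = v) \<Longrightarrow> two_packing S"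
  unfolding two_packing_def by blast

lemma two_packing_subset: "two_packing T \<Longrightarrow> S \<subseteq> T \<Longrightarrow> two_packing S"
  unfolding two_packing_def by blast

lemma three_le_sdist:
  assumes "closed_nbhd u \<inter> closed_nbhd v = {}"
  shows "3 \<le> sdist n t u v"
  unfolding sdist_def
proof (rule INF_greatest)
  fix p assume "p \<in> {p. swalk n t p \<and> hd p = u \<and> last p = v}"
  then have p: "p \<noteq> []" "hd p = u" "last p = v"
    and step: "\<And>i. Suc i < length p \<Longrightarrow> sier_adj (p ! i) (p ! Suc i)"
    unfolding swalk_def using sadj_imp_sier_adj by blast+
  have "\<not> length p \<le> 3"
  proof
    assume "length p \<le> 3"
    then consider x where "p = [x]" | x y where "p = [x, y]" | x y z where "p = [x, y, z]"
      using p(1) by (cases p; cases "tl p"; cases "tl (tl p)") auto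
    then show False
    proof cases
      case 1
      then show False using assms p by (auto simp: closed_nbhd_iff)
    next
      case 2
      then show False using assms p step[of 0] by (auto simp: closed_nbhd_iff)
    next
      case (3 x y z)
      then have "y \<in> closed_nbhd u \<inter> closed_nbhd v"
        using p step[of 0] step[of 1] sier_adj_sym by (auto simp: closed_nbhd_iff)
      then show False using assms by blast
    qed
  qed
  then show "3 \<le> enat (length p - 1)" by simp
qed

lemma two_packing_constant_pairs: "two_packing {[c, c] | c. True}"
proof (rule two_packingI)
  fix u v x assume "u \<in> {[c, c] | c. True}" "v \<in> {[c, c] | c. True}" and x: "x \<in> closed_nbhd u" "x \<in> closed_nbhd v"
  then obtain c d where uv: "u = [c, c]" "v = [d, d]" by auto
  obtain x1 x2 where "x = [x1, x2]" using closed_nbhd_pair_obtain x(1) unfolding uv(1) .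
  then show "u = v" using x uv by (simp add: closed_nbhd_pair)
qed

lemma two_packing_pairs_ending: "two_packing {[x, c] | x. x \<noteq> c}"
proof (rule two_packingI)
  fix u v x assume "u \<in> {[x, c] | x. x \<noteq> c}" "v \<in> {[x, c] | x. x \<noteq> c}" and x: "x \<in> closed_nbhd u" "x \<in> closed_nbhd v"
  then obtain a b where uv: "u = [a, c]" "v = [b, c]" "a \<noteq> c" "b \<noteq> c" by auto
  obtain x1 x2 where "x = [x1, x2]" using closed_nbhd_pair_obtain x(1) unfolding uv(1) .
  then show "u = v" using x uv by (auto simp: closed_nbhd_pair)
qed

lemma obtain_append_pair:
  assumes "2 \<le> length xs"
  obtains w a b where "xs = w @ [a, b]"
proof -
  have "xs = take (length xs - 2) xs @ drop (length xs - 2) xs" by simp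
  moreover have "length (drop (length xs - 2) xs) = 2" using assms by simp
  ultimately show ?thesis
    using that by (metis (no_types, lifting) length_0_conv length_Suc_conv numeral_2_eq_2)
qed

lemma closed_nbhd_append_pair:
  assumes "w' @ [x', y'] \<in> closed_nbhd (w @ [a, b])"
  shows "(w' = w \<and> [x', y'] \<in> closed_nbhd [a, b]) \<or>
    (\<exists>p A C k. A \<noteq> C \<and> w = p @ A # replicate k C \<and> w' = p @ C # replicate k A
       \<and> a = C \<and> b = C \<and> x' = A \<and> y' = A)"
proof (cases "w' @ [x', y'] = w @ [a, b]")
  case True
  then show ?thesis by (simp add: closed_nbhd_iff)
next
  case False
  have len: "length w' = length w"
    using closed_nbhd_length[OF assms] by simp
  obtain p A C k where ne: "A \<noteq> C" and u: "w @ [a, b] = p @ A # replicate k C"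
    and v: "w' @ [x', y'] = p @ C # replicate k A"
    using assms False unfolding closed_nbhd_iff sier_adj_def by blast
  consider "k = 0" | "k = 1" | i where "k = Suc (Suc i)"
    by (metis One_nat_def not0_implies_Suc)
  then show ?thesis
  proof cases
    case 1
    then show ?thesis using u v len ne by (auto simp: closed_nbhd_iff sier_adj_pair)
  next
    case 2
    then show ?thesis using u v len ne by (auto simp: closed_nbhd_iff sier_adj_pair)
  next
    case 3
    have "replicate k X = replicate i X @ [X, X]" for X :: 'a
      using 3 by (simp add: replicate_append_same[symmetric])
    then have "w = p @ A # replicate i C" "a = C" "b = C"
      "w' = p @ C # replicate i A" "x' = A" "y' = A"
      using u v by auto
    then show ?thesis using ne by blast
  qed
qed

definition lift_tail :: "nat list set \<Rightarrow> nat list set \<Rightarrow> nat list \<Rightarrow> nat \<Rightarrow> nat \<Rightarrow> bool" where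
  "lift_tail B Z w x y \<longleftrightarrow> (w \<in> B \<and> x = y) \<or>
     (\<exists>p A C k. A \<noteq> C \<and> p @ A # replicate k C \<in> B \<and> w = p @ C # replicate k A \<and> y = A \<and> x \<noteq> A) \<or>
     (w \<in> Z \<and> y = 1 \<and> x \<noteq> 1)"

definition lift :: "nat list set \<Rightarrow> nat list set \<Rightarrow> nat list set" where
  "lift B Z = {w @ [x, y] | w x y. lift_tail B Z w x y}"

lemma lift_appendI: "lift_tail B Z w x y \<Longrightarrow> w @ [x, y] \<in> lift B Z"
  unfolding lift_def by blast

lemma lift_tail_memI: "w \<in> B \<Longrightarrow> lift_tail B Z w x x"
  unfolding lift_tail_def by simp

lemma lift_tail_nbrI:
  "A \<noteq> C \<Longrightarrow> p @ A # replicate k C \<in> B \<Longrightarrow> x \<noteq> A \<Longrightarrow> lift_tail B Z (p @ C # replicate k A) x A"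
  unfolding lift_tail_def by blast

lemma lift_tail_rootI: "z \<in> Z \<Longrightarrow> x \<noteq> 1 \<Longrightarrow> lift_tail B Z z x 1"
  unfolding lift_tail_def by simp

lemma lift_tail_constant: "lift_tail B Z w x x \<Longrightarrow> w \<in> B"
  unfolding lift_tail_def by auto

locale lift_setting =
  fixes B Z :: "nat list set"
  assumes packing: "two_packing B"
    and roots_disjoint: "Z \<inter> B = {}"
    and roots_far: "\<And>z v. z \<in> Z \<Longrightarrow> v \<in> B \<Longrightarrow> \<not> sier_adj z v"
begin

lemma not_adj_in_B: "v \<in> B \<Longrightarrow> w \<in> B \<Longrightarrow> \<not> sier_adj v w"
  using two_packingD[OF packing, of v w w] sier_adj_irrefl by (auto simp: closed_nbhd_iff)

lemma common_nbr_in_B: "v \<in> B \<Longrightarrow> v' \<in> B \<Longrightarrow> sier_adj w v \<Longrightarrow> sier_adj w v' \<Longrightarrow> v = v'"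
  using two_packingD[OF packing, of v v' w] sier_adj_sym by (auto simp: closed_nbhd_iff)

lemma lift_tail_in_B:
  assumes "w \<in> B" and "lift_tail B Z w x y"
  shows "x = y"
proof -
  have "\<not> (A \<noteq> C \<and> p @ A # replicate k C \<in> B \<and> w = p @ C # replicate k A)" for p A C k
    using not_adj_in_B[OF assms(1)] sier_adjI[of C A p k] by auto
  moreover have "w \<notin> Z" using roots_disjoint assms(1) by blast
  ultimately show ?thesis using assms(2) unfolding lift_tail_def by blast
qed

lemma lift_tail_root:
  assumes "z \<in> Z" and "lift_tail B Z z x y"
  shows "y = 1 \<and> x \<noteq> 1"
proof -
  have "\<not> (A \<noteq> C \<and> p @ A # replicate k C \<in> B \<and> z = p @ C # replicate k A)" for p A C k
    using roots_far[OF assms(1)] sier_adjI[of C A p k] by auto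
  moreover have "z \<notin> B" using roots_disjoint assms(1) by blast
  ultimately show ?thesis using assms(2) unfolding lift_tail_def by blast
qed

lemma lift_tail_nbr:
  assumes v: "p @ A # replicate k C \<in> B" and "A \<noteq> C"
    and tail: "lift_tail B Z (p @ C # replicate k A) x y"
  shows "y = A \<and> x \<noteq> A"
proof -
  define w where "w = p @ C # replicate k A"
  have adj: "sier_adj w (p @ A # replicate k C)"
    unfolding w_def using sier_adjI \<open>A \<noteq> C\<close> by metis
  from tail consider "w \<in> B"
    | p' A' C' k' where "A' \<noteq> C'" "p' @ A' # replicate k' C' \<in> B" "w = p' @ C' # replicate k' A'"
        "y = A'" "x \<noteq> A'"
    | "w \<in> Z"
    unfolding lift_tail_def w_def by blast
  then show ?thesis
  proof cases
    case 1
    then show ?thesis using not_adj_in_B[OF v] adj sier_adj_sym by blast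
  next
    case (2 p' A' C' k')
    have "sier_adj w (p' @ A' # replicate k' C')"
      using 2 sier_adjI by metis
    then have "p @ A # replicate k C = p' @ A' # replicate k' C'"
      using common_nbr_in_B[OF v 2(2) adj] by blast
    then have "A = A'"
      using sier_adj_unique[OF \<open>A \<noteq> C\<close> 2(1)] 2(3) w_def by metis
    then show ?thesis using 2 by simp
  next
    case 3
    then show ?thesis using roots_far[OF _ v] adj by blast
  qed
qed

lemma tails_two_packing: "two_packing {[x, y] | x y. lift_tail B Z w x y}"
proof -
  have "{[x, y] | x y. lift_tail B Z w x y} \<subseteq> {[c, c] | c. True} \<or>
    (\<exists>c. {[x, y] | x y. lift_tail B Z w x y} \<subseteq> {[x, c] | x. x \<noteq> c})"
  proof (cases "\<exists>x y. lift_tail B Z w x y")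
    case False
    then show ?thesis by blast
  next
    case True
    then obtain x0 y0 where "lift_tail B Z w x0 y0" by blast
    then consider "w \<in> B"
      | p A C k where "A \<noteq> C" "p @ A # replicate k C \<in> B" "w = p @ C # replicate k A"
      | "w \<in> Z"
      unfolding lift_tail_def by blast
    then show ?thesis
    proof cases
      case 1
      then show ?thesis using lift_tail_in_B by blast
    next
      case (2 p A C k)
      then show ?thesis using lift_tail_nbr by blast
    next
      case 3
      then show ?thesis using lift_tail_root by blast
    qed
  qed
  then show ?thesis
  proof (elim disjE exE)
    assume "{[x, y] | x y. lift_tail B Z w x y} \<subseteq> {[c, c] | c. True}"
    then show ?thesis by (rule two_packing_subset[OF two_packing_constant_pairs])
  next
    fix c assume "{[x, y] | x y. lift_tail B Z w x y} \<subseteq> {[x, c] | x. x \<noteq> c}"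
    then show ?thesis by (rule two_packing_subset[OF two_packing_pairs_ending])
  qed
qed

lemma lift_tail_cross_conflict:
  assumes "A \<noteq> C" and "lift_tail B Z (p @ C # replicate k A) A A"
    and "lift_tail B Z (p @ A # replicate k C) x y" and "[x, y] \<in> closed_nbhd [C, C]"
  shows False
proof -
  have "p @ C # replicate k A \<in> B"
    using lift_tail_constant assms(2) .
  then have "y = C \<and> x \<noteq> C"
    using lift_tail_nbr assms(1,3) by metis
  then show False using assms(4) by (simp add: closed_nbhd_pair)
qed

lemma lift_tail_cross_unique:
  assumes "A \<noteq> C" and "A' \<noteq> C'" and w: "p @ A # replicate k C = p' @ A' # replicate k' C'"
    and "lift_tail B Z (p @ C # replicate k A) A A" and "lift_tail B Z (p' @ C' # replicate k' A') A' A'"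
  shows "p @ C # replicate k A = p' @ C' # replicate k' A' \<and> A = A'"
proof -
  have "p @ C # replicate k A \<in> B" "p' @ C' # replicate k' A' \<in> B"
    using lift_tail_constant assms(4,5) by metis+
  moreover have "sier_adj (p @ A # replicate k C) (p @ C # replicate k A)"
    "sier_adj (p @ A # replicate k C) (p' @ C' # replicate k' A')"
    using sier_adjI assms(1,2) w by metis+
  ultimately have "p @ C # replicate k A = p' @ C' # replicate k' A'"
    using common_nbr_in_B by blast
  then show ?thesis
    using sier_adj_unique[OF assms(1,2) w] by blast
qed

lemma lift_two_packing: "two_packing (lift B Z)"
proof (rule two_packingI)
  fix u1 u2 v assume "u1 \<in> lift B Z" "u2 \<in> lift B Z" and v: "v \<in> closed_nbhd u1" "v \<in> closed_nbhd u2"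
  then obtain w1 x1 y1 w2 x2 y2 where u: "u1 = w1 @ [x1, y1]" "u2 = w2 @ [x2, y2]"
    and tail1: "lift_tail B Z w1 x1 y1" and tail2: "lift_tail B Z w2 x2 y2"
    unfolding lift_def by auto
  have "2 \<le> length v"
    using closed_nbhd_length[OF v(1)] u(1) by simp
  then obtain w a b where w: "v = w @ [a, b]"
    by (rule obtain_append_pair)
  have near1: "w1 @ [x1, y1] \<in> closed_nbhd (w @ [a, b])" and near2: "w2 @ [x2, y2] \<in> closed_nbhd (w @ [a, b])"
    using v u w closed_nbhd_sym by blast+
  show "u1 = u2"
  proof (cases "w1 = w \<and> [x1, y1] \<in> closed_nbhd [a, b]"; cases "w2 = w \<and> [x2, y2] \<in> closed_nbhd [a, b]")
    assume same1: "w1 = w \<and> [x1, y1] \<in> closed_nbhd [a, b]" and same2: "w2 = w \<and> [x2, y2] \<in> closed_nbhd [a, b]"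
    have "[a, b] \<in> closed_nbhd [x1, y1]" "[a, b] \<in> closed_nbhd [x2, y2]"
      using same1 same2 closed_nbhd_sym by blast+
    then have "[x1, y1] = [x2, y2]"
      by (rule two_packingD[OF tails_two_packing[of w], rotated 2]) (use tail1 tail2 same1 same2 in auto)
    then show ?thesis using u same1 same2 by simp
  next
    assume "w1 = w \<and> [x1, y1] \<in> closed_nbhd [a, b]" "\<not> (w2 = w \<and> [x2, y2] \<in> closed_nbhd [a, b])"
    then show ?thesis
      using closed_nbhd_append_pair[OF near2] tail1 tail2 lift_tail_cross_conflict by metis
  next
    assume "\<not> (w1 = w \<and> [x1, y1] \<in> closed_nbhd [a, b])" "w2 = w \<and> [x2, y2] \<in> closed_nbhd [a, b]"
    then show ?thesis
      using closed_nbhd_append_pair[OF near1] tail1 tail2 lift_tail_cross_conflict by metis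
  next
    assume "\<not> (w1 = w \<and> [x1, y1] \<in> closed_nbhd [a, b])" "\<not> (w2 = w \<and> [x2, y2] \<in> closed_nbhd [a, b])"
    then obtain p A C k p' A' C' k' where
      "A \<noteq> C" "w = p @ A # replicate k C" "w1 = p @ C # replicate k A" "x1 = A" "y1 = A"
      "A' \<noteq> C'" "w = p' @ A' # replicate k' C'" "w2 = p' @ C' # replicate k' A'" "x2 = A'" "y2 = A'"
      using closed_nbhd_append_pair[OF near1] closed_nbhd_append_pair[OF near2] by blast
    then show ?thesis
      using lift_tail_cross_unique[of A C A' C' p k p' k'] tail1 tail2 u by auto
  qed
qed

lemma root_not_adj_lift:
  assumes "z \<in> Z" and "u \<in> lift B Z"
  shows "\<not> sier_adj (z @ [1, 1]) u"
proof
  assume "sier_adj (z @ [1, 1]) u"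
  moreover obtain w x y where u: "u = w @ [x, y]" and tail: "lift_tail B Z w x y"
    using assms(2) unfolding lift_def by auto
  ultimately have "w @ [x, y] \<in> closed_nbhd (z @ [1, 1])"
    by (simp add: closed_nbhd_iff)
  from closed_nbhd_append_pair[OF this] show False
  proof (elim disjE exE conjE)
    assume "w = z" "[x, y] \<in> closed_nbhd [1, 1]"
    then have "x = 1" by (simp add: closed_nbhd_pair)
    then show False
      using lift_tail_root[OF assms(1)] tail \<open>w = z\<close> by blast
  next
    fix p A C k assume "A \<noteq> C" "z = p @ A # replicate k C" "w = p @ C # replicate k A" "x = A" "y = A"
    then show False
      using lift_tail_constant[of B Z w A] tail roots_far[OF assms(1)] sier_adjI by metis
  qed
qed

end

definition nonconst :: "'a list \<Rightarrow> bool" where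
  "nonconst v \<longleftrightarrow> (\<exists>i. Suc i < length v \<and> v ! i \<noteq> v ! Suc i)"

lemma nonconst_append_pair: "x \<noteq> y \<Longrightarrow> nonconst (w @ [x, y])"
  unfolding nonconst_def by (rule exI[of _ "length w"]) (simp add: nth_append)

lemma nonconst_append:
  assumes "nonconst v"
  shows "nonconst (v @ w)"
proof -
  obtain i where "Suc i < length v" "v ! i \<noteq> v ! Suc i"
    using assms unfolding nonconst_def by blast
  then show ?thesis
    unfolding nonconst_def by (intro exI[of _ i]) (simp add: nth_append)
qed

lemma lastdiff_decomp:
  assumes "nonconst v"
  defines "i \<equiv> lastdiff v"
  shows "v ! i \<noteq> v ! Suc i \<and> v = take i v @ v ! i # replicate (length v - i - 1) (v ! Suc i)"
proof -
  define P where "P j \<longleftrightarrow> Suc j < length v \<and> v ! j \<noteq> v ! Suc j" for j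
  have bound: "P j \<Longrightarrow> j \<le> length v" for j
    unfolding P_def by simp
  have i_Greatest: "i = Greatest P"
    unfolding i_def lastdiff_def P_def ..
  have "P i"
    using assms(1) GreatestI_nat[of P _ "length v"] bound unfolding i_Greatest nonconst_def P_def by blast
  have after_i: "v ! j = v ! Suc i" if "Suc i \<le> j" "j < length v" for j
    using that
  proof (induction j rule: dec_induct)
    case (step j)
    have "\<not> P j"
      using Greatest_le_nat[of P j "length v"] bound step.hyps unfolding i_Greatest by fastforce
    then show ?case
      using step unfolding P_def by simp
  qed simp
  have "v = take i v @ v ! i # replicate (length v - i - 1) (v ! Suc i)"
  proof (rule list_eq_take_nth_replicate)
    show "i < length v" using \<open>P i\<close> unfolding P_def by simp
  qed (metis after_i Suc_leI)
  then show ?thesis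
    using \<open>P i\<close> unfolding P_def by blast
qed

lemma E3_obtain:
  assumes "nonconst v" and "u \<in> E3 n v"
  obtains p A C k a where "A \<noteq> C" "v = p @ A # replicate k C"
    "u = (p @ C # replicate k A) @ [a, A]" "a \<noteq> A"
proof -
  define i where "i = lastdiff v"
  have v: "v ! i \<noteq> v ! Suc i" "v = take i v @ v ! i # replicate (length v - i - 1) (v ! Suc i)"
    using lastdiff_decomp[OF assms(1)] unfolding i_def by auto
  obtain a where "a \<noteq> v ! i"
    "u = (take i v @ v ! Suc i # replicate (length v - i - 1) (v ! i)) @ [a, v ! i]"
    using assms(2) unfolding E3_def Let_def i_def by auto
  then show ?thesis using that v by blast
qed

lemma E1_nonconst: "nonconst v \<Longrightarrow> u \<in> E1 n v \<Longrightarrow> nonconst u"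
  unfolding E1_def using nonconst_append by auto

lemma E2_nonconst: "u \<in> E2 n v \<Longrightarrow> nonconst u"
  unfolding E2_def using nonconst_append_pair[of _ "last v" "butlast v @ [_]"] by auto

lemma E3_nonconst:
  assumes "nonconst v" and "u \<in> E3 n v"
  shows "nonconst u"
  using E3_obtain[OF assms] nonconst_append_pair by metis

lemma E1_subset_lift: "v \<in> B \<Longrightarrow> E1 n v \<subseteq> lift B Z"
  unfolding E1_def by (auto intro: lift_appendI lift_tail_memI)

lemma E2_subset_lift:
  assumes "v \<in> B" and "v \<noteq> []"
  shows "E2 n v \<subseteq> lift B Z"
proof
  fix u assume "u \<in> E2 n v"
  then obtain a b where u: "u = (butlast v @ [a]) @ [b, last v]" "a \<noteq> last v" "b \<noteq> last v"
    unfolding E2_def by auto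
  have "butlast v @ last v # replicate 0 a \<in> B"
    using assms by simp
  then have "lift_tail B Z (butlast v @ a # replicate 0 (last v)) b (last v)"
    by (rule lift_tail_nbrI[rotated]) (use u in auto)
  then show "u \<in> lift B Z"
    using lift_appendI by (fastforce simp: u(1))
qed

lemma E3_subset_lift:
  assumes "v \<in> B" and "nonconst v"
  shows "E3 n v \<subseteq> lift B Z"
proof
  fix u assume "u \<in> E3 n v"
  then obtain p A C k a where "A \<noteq> C" "v = p @ A # replicate k C"
    "u = (p @ C # replicate k A) @ [a, A]" "a \<noteq> A"
    by (rule E3_obtain[OF assms(2)])
  then show "u \<in> lift B Z"
    using lift_appendI[OF lift_tail_nbrI] assms(1) by metis
qed

lemma E_sets_subset_lift:
  assumes "v \<in> B" and "nonconst v"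
  shows "E1 n v \<union> E2 n v \<union> E3 n v \<subseteq> lift B Z"
proof -
  have "v \<noteq> []"
    using assms(2) unfolding nonconst_def by auto
  then show ?thesis
    using E1_subset_lift E2_subset_lift E3_subset_lift assms by (metis Un_least)
qed

lemma root_tails_subset_lift:
  assumes "z \<in> Z"
  shows "{z @ [a, 1] | a. a \<noteq> 1} \<subseteq> lift B Z"
proof
  fix u assume "u \<in> {z @ [a, 1] | a. a \<noteq> 1}"
  then obtain a where "u = z @ [a, 1]" "a \<noteq> 1" by blast
  then show "u \<in> lift B Z"
    using lift_appendI[OF lift_tail_rootI[OF assms]] by simp
qed

lemma Dset_add_2:
  "Dset n (m + 2) =
     (if odd m then E1 n (replicate m 1) \<union> E2 n (replicate m 1)
      else {replicate m 1 @ [a, 1] | a. a \<in> {1..n}})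
     \<union> (\<Union>v \<in> Dset n m - {replicate m 1}. E1 n v \<union> E2 n v \<union> E3 n v)"
proof (cases m)
  case (Suc k)
  then have "m + 2 = Suc (Suc (Suc k))" by simp
  then show ?thesis using Suc by (simp only: Dset.simps Let_def) simp
qed (simp add: numeral_2_eq_2)

lemma replicate_add_2: "replicate (m + 2) x = replicate m x @ [x, x]"
  by (induction m) auto

lemma replicate_mem_Dset:
  assumes "n \<ge> 1" and "t \<ge> 1"
  shows "replicate t 1 \<in> Dset n t"
proof (cases "t = 1")
  case False
  then obtain m where t: "t = m + 2"
    using assms(2) by (metis add_2_eq_Suc' le_neq_implies_less less_natE one_add_one plus_1_eq_Suc)
  have "replicate m 1 @ [1, 1] \<in> E1 n (replicate m 1)"
    "replicate m 1 @ [1, 1] \<in> {replicate m 1 @ [a, 1] | a. a \<in> {1..n}}"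
    using assms(1) unfolding E1_def by auto
  then show ?thesis
    unfolding t Dset_add_2 replicate_add_2 by auto
qed simp

lemma Dset_nonconst: "v \<in> Dset n t \<Longrightarrow> v \<noteq> replicate t 1 \<Longrightarrow> nonconst v"
proof (induction t arbitrary: v rule: nat_induct2)
  case (step m)
  have old: "nonconst u" if "u \<in> E1 n w \<union> E2 n w \<union> E3 n w" "w \<in> Dset n m - {replicate m 1}" for u w
    using that step.IH E1_nonconst E2_nonconst E3_nonconst by blast
  have new_odd: "nonconst v" if "odd m" "v \<in> E1 n (replicate m 1) \<union> E2 n (replicate m 1)"
  proof -
    obtain j where "m = Suc j" using \<open>odd m\<close> odd_Suc_minus_one by metis
    then have "replicate m 1 @ [a, a] = (replicate j 1 @ [1, a]) @ [a]" for a :: nat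
      by (simp add: replicate_append_same[symmetric])
    then have "nonconst (replicate m 1 @ [a, a])" if "a \<noteq> 1" for a :: nat
      using nonconst_append[OF nonconst_append_pair[OF that[symmetric]]] by metis
    then show ?thesis
      using that step.prems(2) E2_nonconst unfolding E1_def replicate_add_2 by auto
  qed
  have new_even: "nonconst v" if v: "v \<in> {replicate m 1 @ [a, 1] | a. a \<in> {1..n}}"
  proof -
    obtain a where v_eq: "v = replicate m 1 @ [a, 1]" using v by blast
    moreover have "a \<noteq> 1"
      using step.prems(2) replicate_add_2 v_eq by metis
    ultimately show ?thesis using nonconst_append_pair by simp
  qed
  show ?case
    using step.prems(1) old new_odd new_even unfolding Dset_add_2 by (auto split: if_splits)
qed (auto simp: numeral_2_eq_2)

definition Dstar :: "nat \<Rightarrow> nat \<Rightarrow> nat list set" where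
  "Dstar n t = Dset n t - (if even t then {replicate t 1} else {})"

lemma Dstar_add_2_subset_lift:
  assumes "n \<ge> 1"
  shows "Dstar n (m + 2) \<subseteq> lift (Dstar n m) (if even m then {replicate m 1} else {})"
    (is "_ \<subseteq> lift ?B ?Z")
proof -
  have old: "E1 n v \<union> E2 n v \<union> E3 n v \<subseteq> lift ?B ?Z" if "v \<in> Dset n m - {replicate m 1}" for v
  proof (rule E_sets_subset_lift)
    show "v \<in> ?B" using that unfolding Dstar_def by auto
    show "nonconst v" using that Dset_nonconst by blast
  qed
  have new_odd: "E1 n (replicate m 1) \<union> E2 n (replicate m 1) \<subseteq> lift ?B ?Z" if "odd m"
  proof -
    have "replicate m 1 \<in> ?B" "replicate m (1::nat) \<noteq> []"
      using that replicate_mem_Dset[OF assms, of m] unfolding Dstar_def by (auto elim: oddE)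
    then show ?thesis using E1_subset_lift E2_subset_lift by blast
  qed
  have new_even: "{replicate m 1 @ [a, 1] | a. a \<in> {1..n}} - {replicate (m + 2) 1} \<subseteq> lift ?B ?Z"
    if "even m"
    using root_tails_subset_lift[of "replicate m 1" ?Z ?B] that unfolding replicate_add_2 by auto
  show ?thesis
  proof
    fix u assume u: "u \<in> Dstar n (m + 2)"
    then have u_ne: "u \<notin> {replicate (m + 2) 1} \<or> odd m"
      unfolding Dstar_def by auto
    from u consider
        v where "v \<in> Dset n m - {replicate m 1}" "u \<in> E1 n v \<union> E2 n v \<union> E3 n v"
      | "odd m" "u \<in> E1 n (replicate m 1) \<union> E2 n (replicate m 1)"
      | "even m" "u \<in> {replicate m 1 @ [a, 1] | a. a \<in> {1..n}}"
      unfolding Dstar_def Dset_add_2 by (auto split: if_splits)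
    then show "u \<in> lift ?B ?Z"
    proof cases
      case 1
      then show ?thesis using old by blast
    next
      case 2
      then show ?thesis using new_odd by blast
    next
      case 3
      then show ?thesis using new_even u_ne by blast
    qed
  qed
qed

lemma Dstar_two_packing:
  assumes "n \<ge> 1"
  shows "two_packing (Dstar n t) \<and> (even t \<longrightarrow> (\<forall>u \<in> Dstar n t. \<not> sier_adj (replicate t 1) u))"
proof (induction t rule: nat_induct2)
  case 0
  then show ?case by (simp add: Dstar_def two_packing_def)
next
  case 1
  then show ?case by (simp add: Dstar_def two_packing_def)
next
  case (step m)
  let ?Z = "if even m then {replicate m 1} else {}"
  interpret lift_setting "Dstar n m" ?Z
    using step.IH by unfold_locales (auto simp: Dstar_def split: if_splits)
  have "two_packing (Dstar n (m + 2))"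
    using two_packing_subset[OF lift_two_packing Dstar_add_2_subset_lift[OF assms]] .
  moreover have "\<not> sier_adj (replicate (m + 2) 1) u" if "even m" "u \<in> Dstar n (m + 2)" for u
  proof -
    have "u \<in> lift (Dstar n m) ?Z"
      using Dstar_add_2_subset_lift[OF assms] that(2) by blast
    moreover have "replicate m 1 \<in> ?Z"
      using that(1) by simp
    ultimately show ?thesis
      using root_not_adj_lift replicate_add_2 by metis
  qed
  ultimately show ?case by simp
qed

theorem lemma2p5:
  fixes n t :: nat
  assumes "n \<ge> 2" and "t \<ge> 1"
  shows "(odd t \<longrightarrow> (\<forall>u \<in> Dset n t. \<forall>v \<in> Dset n t. u \<noteq> v \<longrightarrow> sdist n t u v \<ge> 3))
       \<and> (even t \<longrightarrow> (\<forall>u \<in> Dset n t - {replicate t 1}. \<forall>v \<in> Dset n t - {replicate t 1}.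
              u \<noteq> v \<longrightarrow> sdist n t u v \<ge> 3))"
proof -
  have "two_packing (Dstar n t)"
    using Dstar_two_packing assms(1) by simp
  then have "sdist n t u v \<ge> 3" if "u \<in> Dstar n t" "v \<in> Dstar n t" "u \<noteq> v" for u v
    using that three_le_sdist unfolding two_packing_def by blast
  then show ?thesis
    unfolding Dstar_def by auto
qed

end
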